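(* Let $\mathfrak m,\mathfrak n\in\mathbb R^{+}$ with $\mathfrak m<\mathfrak n$, $\Omega=[\mathfrak m,\mathfrak n]$, $\sigma>0$, $\varrho>0$, $0<\kappa<\mu\le1$, and let $\Phi\colon\Omega\to\mathbb R$ be an increasing differentiable function with $\Phi'(\ell)\ne0$ on $\Omega$. Let $\alpha\in C([\mathfrak m-\sigma,\mathfrak m],\mathbb R)$. Assume: (H1) $\mathfrak f\colon\Omega\to[\mathfrak m-\sigma,\mathfrak n]$ is continuous with $\mathfrak f(\ell)\le\ell$ for all $\ell\in\Omega$; (H2) $\mathbb Q\colon\Omega\times\mathbb R^2\to\mathbb R$ is continuous and there exists $\mathbb L_{\mathbb Q}>0$ such that $|\mathbb Q(\ell,\mathfrak b_2,\mathfrak a_2)-\mathbb Q(\ell,\mathfrak b_1,\mathfrak a_1)|\le\mathbb L_{\mathbb Q}(|\mathfrak b_2-\mathfrak b_1|+|\mathfrak a_2-\mathfrak a_1|)$ for all $\ell\in\Omega$ and $\mathfrak a_1,\mathfrak a_2,\mathfrak b_1,\mathfrak b_2\in\mathbb R$. Then the problem $$ \begin{cases} {^{c}\mathbb{D}}_{\mathfrak m^{+}}^{\mu;\Phi}\mathfrak z(\ell)+\varrho\,{^{c}\mathbb{D}}_{\mathfrak m^{+}}^{\kappa;\Phi}\mathfrak z(\ell)=\mathbb Q\bigl(\ell,\mathfrak z(\ell),\mathfrak z(\mathfrak f(\ell))\bigr), & \ell\in\Omega,\\ \mathfrak z(\ell)=\alpha(\ell), & \ell\in[\mathfrak m-\sigma,\mathfrak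 m], \end{cases} $$ possesses a unique solution belonging to $C([\mathfrak m-\sigma,\mathfrak n],\mathbb R)\cap C([\mathfrak m,\mathfrak n],\mathbb R)$.
   Context: Mittag-Leffler functions: $\mathbb M_{p}(\vartheta)=\sum_{k\ge0}\frac{\vartheta^k}{\Gamma(pk+1)}$, $\mathbb M_{p,q}(\vartheta)=\sum_{k\ge0}\frac{\vartheta^k}{\Gamma(pk+q)}$. The $\Phi$-Riemann–Liouville integral of order $\gamma>0$: $\mathbb I_{\mathfrak m^+}^{\gamma;\Phi}\mathfrak z(\ell)=\frac{1}{\Gamma(\gamma)}\int_{\mathfrak m}^{\ell}\Phi'(\eta)(\Phi(\ell)-\Phi(\eta))^{\gamma-1}\mathfrak z(\eta)\,\mathrm d\eta$. For $0<\gamma<1$, the $\Phi$-Caputo derivative is ${^{c}\mathbb D}_{\mathfrak m^+}^{\gamma;\Phi}\mathfrak z=\mathbb I_{\mathfrak m^+}^{1-\gamma;\Phi}(\mathfrak z'/\Phi')$, and for $\gamma=1$ it is $\mathfrak z'/\Phi'$. A solution of the problem is understood as a function $\mathfrak z\in C([\mathfrak m-\sigma,\mathfrak n],\mathbb R)$ with $\mathfrak z=\alpha$ on $[\mathfrak m-\sigma,\mathfrak m]$ and $\mathfrak z(\ell)=\alpha(\mathfrak m)+\int_{\mathfrak m}^{\ell}\Phi'(\eta)(\Phi(\ell)-\Phi(\eta))^{\mu-1}\mathbb M_{\mu-\kappa,\mu}(-\varrho(\Phi(\ell)-\Phi(\eta))^{\mu-\kappa})\mathbb Q(\eta,\mathfrak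 z(\eta),\mathfrak z(\mathfrak f(\eta)))\,\mathrm d\eta$ for $\ell\in\Omega$ (the paper shows the problem is equivalent to this integral equation). *)

theory Defs
  imports "HOL-Analysis.Analysis"
begin

definition ML2 :: "real \<Rightarrow> real \<Rightarrow> real \<Rightarrow> real" where
  "ML2 p q x = (\<Sum>k. x ^ k / Gamma (p * real k + q))"

text \<open>Solution of the delay problem in the sense of the equivalent integral equation.
  Phi' is the derivative of Phi on the interval.\<close>
definition is_solution ::
  "real \<Rightarrow> real \<Rightarrow> real \<Rightarrow> real \<Rightarrow> real \<Rightarrow> real \<Rightarrow> (real \<Rightarrow> real) \<Rightarrow> (real \<Rightarrow> real)
   \<Rightarrow> (real \<Rightarrow> real) \<Rightarrow> (real \<Rightarrow> real) \<Rightarrow> (real \<Rightarrow> real \<Rightarrow> real \<Rightarrow> real)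
   \<Rightarrow> (real \<Rightarrow> real) \<Rightarrow> bool" where
  "is_solution m n \<sigma> \<mu> \<kappa> \<rho> \<Phi> \<Phi>' \<alpha> f Q z \<longleftrightarrow>
     continuous_on {m - \<sigma>..n} z \<and> continuous_on {m..n} z \<and>
     (\<forall>l\<in>{m - \<sigma>..m}. z l = \<alpha> l) \<and>
     (\<forall>l\<in>{m..n}.
        ((\<lambda>\<eta>. \<Phi>' \<eta> * (\<Phi> l - \<Phi> \<eta>) powr (\<mu> - 1)
              * ML2 (\<mu> - \<kappa>) \<mu> (- \<rho> * (\<Phi> l - \<Phi> \<eta>) powr (\<mu> - \<kappa>))
              * Q \<eta> (z \<eta>) (z (f \<eta>)))
          has_integral (z l - \<alpha> m)) {m..l})"

end

theory Submission
  imports Defs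
begin

(* The problem is the fixed point equation z = T z on C[m - sigma, n], where T z = alpha on
   [m - sigma, m] and, on [m, n],
     T z l = alpha m + int_m^l Phi' eta (Phi l - Phi eta)^(mu - 1) E (Phi l - Phi eta) Q (eta, z eta, z (f eta)),
   with E s = M_{mu - kappa, mu} (- rho s^(mu - kappa)) continuous, hence bounded, on the compact
   range of Phi l - Phi eta. The weakly singular kernel is integrable, so T preserves continuity.
   Since f eta <= eta, the Lipschitz condition on Q makes T a contraction with respect to the
   Bielecki norm sup_t exp (- theta Phi t) |z t| once theta is large enough, and Banach's fixed
   point theorem yields exactly one solution. *)

lemma Gamma_ge_fact_floor:
  fixes x :: real
  assumes "2 \<le> x"
  shows "fact (nat \<lfloor>x\<rfloor> - 1) \<le> Gamma x"
proof -
  define N where "N = nat \<lfloor>x\<rfloor>"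
  have N: "2 \<le> N" "real N \<le> x"
    using assms unfolding N_def by linarith+
  have "Gamma (real N) \<le> Gamma x"
    using N by (cases "real N = x") (auto intro!: less_imp_le Gamma_real_strict_mono)
  moreover have "Gamma (real N) = fact (N - 1)"
    using N Gamma_fact[of "N - 1"] by (simp add: of_nat_diff)
  ultimately show ?thesis
    unfolding N_def by simp
qed

lemma power_div_fact_le_exp:
  fixes B :: real
  assumes "0 \<le> B"
  shows "B ^ j / fact j \<le> exp B"
proof -
  have "summable (\<lambda>k. B ^ k / fact k)"
    using summable_exp[of B] by (simp add: divide_inverse mult.commute)
  then have "(\<Sum>k\<in>{j}. B ^ k / fact k) \<le> (\<Sum>k. B ^ k / fact k)"
    using assms by (intro sum_le_suminf) auto
  also have "\<dots> = exp B"
    by (simp add: exp_def field_simps)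
  finally show ?thesis
    by simp
qed

text \<open>With \<open>B powr p = 2 K + 1\<close>, the bounds \<open>Gamma (p k + q) \<ge> J!\<close> for \<open>J \<ge> p k - 2\<close> and
  \<open>B ^ J / J! \<le> exp B\<close> dominate the terms by a multiple of \<open>(K / (2 K + 1)) ^ k\<close>.\<close>

lemma ML2_term_le:
  fixes p q K :: real
  assumes p: "0 < p" and q: "0 < q" and K: "0 \<le> K" and k: "2 \<le> p * real k"
  defines "B \<equiv> (2 * K + 1) powr (1 / p)"
  shows "K ^ k / Gamma (p * real k + q) \<le> exp B * B\<^sup>2 * (K / (2 * K + 1)) ^ k"
proof -
  have B1: "1 \<le> B"
    unfolding B_def using K p by (simp add: ge_one_powr_ge_zero)
  define x where "x = p * real k + q"
  have x2: "2 \<le> x"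
    using k q unfolding x_def by linarith
  define J where "J = nat \<lfloor>x\<rfloor> - 1"
  have "p * real k - 2 \<le> real J"
    using x2 q unfolding J_def x_def by linarith
  then have "B powr (p * real k - 2) \<le> B ^ J"
    using B1 by (simp add: powr_mono flip: powr_realpow)
  moreover have "B powr (p * real k - 2) = (2 * K + 1) ^ k / B\<^sup>2"
  proof -
    have "B powr (p * real k) = (B powr p) powr real k"
      by (simp add: powr_powr)
    also have "\<dots> = (2 * K + 1) ^ k"
      unfolding B_def using K p by (simp add: powr_powr powr_realpow)
    finally show ?thesis
      using B1 by (simp add: powr_diff powr_realpow)
  qed
  ultimately have BJ: "(2 * K + 1) ^ k / B\<^sup>2 \<le> B ^ J"
    by simp
  have "K ^ k / Gamma x \<le> K ^ k / fact J"
    using Gamma_ge_fact_floor[OF x2] K unfolding J_def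
    by (intro divide_left_mono) (auto intro!: mult_pos_pos simp: order_less_le_trans[OF fact_gt_zero])
  also have "\<dots> \<le> K ^ k * (exp B / B ^ J)"
  proof -
    have "1 / fact J \<le> exp B / B ^ J"
      using power_div_fact_le_exp[of B J] B1 by (simp add: field_simps)
    then show ?thesis
      using K by (simp add: divide_inverse mult_left_mono)
  qed
  also have "\<dots> \<le> K ^ k * (exp B / ((2 * K + 1) ^ k / B\<^sup>2))"
    using BJ K B1 by (intro mult_left_mono divide_left_mono) auto
  also have "\<dots> = exp B * B\<^sup>2 * (K / (2 * K + 1)) ^ k"
    using K by (simp add: power_divide field_simps)
  finally show ?thesis
    unfolding x_def .
qed

lemma summable_ML2_series:
  fixes p q K :: real
  assumes "0 < p" "0 < q" "0 \<le> K"
  shows "summable (\<lambda>k. K ^ k / Gamma (p * real k + q))"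
proof (rule summable_comparison_test')
  define B where "B = (2 * K + 1) powr (1 / p)"
  show "summable (\<lambda>k. exp B * B\<^sup>2 * (K / (2 * K + 1)) ^ k)"
    using assms by (intro summable_mult summable_geometric) auto
  fix k :: nat
  assume "nat \<lceil>2 / p\<rceil> \<le> k"
  then have "2 / p \<le> real k"
    by linarith
  with assms have "2 \<le> p * real k"
    by (simp add: field_simps)
  with assms show "norm (K ^ k / Gamma (p * real k + q)) \<le> exp B * B\<^sup>2 * (K / (2 * K + 1)) ^ k"
    unfolding B_def using ML2_term_le[of p q K k] by (simp add: abs_of_nonneg)
qed

lemma isCont_ML2:
  fixes p q :: real
  assumes "0 < p" "0 < q"
  shows "isCont (ML2 p q) x"
proof -
  have ML2_eq: "ML2 p q = (\<lambda>x. \<Sum>k. inverse (Gamma (p * real k + q)) * x ^ k)"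
    by (simp add: ML2_def divide_inverse mult.commute fun_eq_iff)
  have "summable (\<lambda>k. inverse (Gamma (p * real k + q)) * (\<bar>x\<bar> + 1) ^ k)"
    using summable_ML2_series[OF assms, of "\<bar>x\<bar> + 1"] by (simp add: divide_inverse mult.commute)
  then show ?thesis
    unfolding ML2_eq by (rule isCont_powser) simp
qed

lemma continuous_on_ML2: "0 < p \<Longrightarrow> 0 < q \<Longrightarrow> continuous_on S (ML2 p q)"
  by (intro continuous_at_imp_continuous_on ballI isCont_ML2)

lemma mono_on_has_real_derivative_nonneg:
  fixes f :: "real \<Rightarrow> real"
  assumes mono: "mono_on {a..b} f" and "a < b" and x: "x \<in> {a..b}"
    and deriv: "(f has_real_derivative D) (at x within {a..b})"
  shows "0 \<le> D"
proof (rule tendsto_lowerbound)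
  show "((\<lambda>y. (f y - f x) / (y - x)) \<longlongrightarrow> D) (at x within {a..b})"
    using deriv by (simp add: has_field_derivative_iff)
  have "0 \<le> (f y - f x) / (y - x)" if "y \<in> {a..b}" for y
    using mono_onD[OF mono x that] mono_onD[OF mono that x]
    by (cases "y < x") (auto simp: divide_nonpos_neg)
  then show "\<forall>\<^sub>F y in at x within {a..b}. 0 \<le> (f y - f x) / (y - x)"
    by (auto simp: eventually_at_filter)
  show "at x within {a..b} \<noteq> bot"
    using x \<open>a < b\<close>
    by (metis atLeastAtMost_iff at_within_Icc_at at_within_Icc_at_left at_within_Icc_at_right
        nless_le trivial_limit_at trivial_limit_at_left_real trivial_limit_at_right_real)
qed

lemma strict_mono_on_if_deriv_nonzero:
  fixes f :: "real \<Rightarrow> real"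
  assumes mono: "mono_on {a..b} f"
    and deriv: "\<And>x. x \<in> {a<..<b} \<Longrightarrow> (f has_real_derivative f' x) (at x)"
    and nonzero: "\<And>x. x \<in> {a<..<b} \<Longrightarrow> f' x \<noteq> 0"
  shows "strict_mono_on {a..b} f"
proof (rule strict_mono_onI, rule ccontr)
  fix x y
  assume xy: "x \<in> {a..b}" "y \<in> {a..b}" "x < y" and "\<not> f x < f y"
  then have const: "f x = f y"
    using mono_onD[OF mono xy(1,2)] by simp
  define t where "t = (x + y) / 2"
  have t: "t \<in> {a<..<b}"
    using xy unfolding t_def by auto
  have "f' t = 0"
  proof (rule DERIV_local_const[OF deriv[OF t]])
    show "0 < (y - x) / 2"
      using xy by simp
    show "\<forall>s. \<bar>t - s\<bar> < (y - x) / 2 \<longrightarrow> f t = f s"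
    proof (intro allI impI)
      fix s
      assume "\<bar>t - s\<bar> < (y - x) / 2"
      then have "s \<in> {x..y}" "t \<in> {x..y}"
        unfolding t_def by (auto simp: abs_less_iff field_simps)
      with xy have "f x \<le> f s" "f s \<le> f y" "f x \<le> f t" "f t \<le> f y"
        by (auto intro!: mono_onD[OF mono])
      with const show "f t = f s"
        by linarith
    qed
  qed
  with nonzero t show False
    by blast
qed

lemma absolutely_integrable_nonneg_times_continuous:
  fixes k h :: "real \<Rightarrow> real"
  assumes "k integrable_on {a..b}" "\<And>x. x \<in> {a..b} \<Longrightarrow> 0 \<le> k x"
    and "continuous_on {a..b} h"
  shows "(\<lambda>x. k x * h x) absolutely_integrable_on {a..b}"
proof -
  have "(\<lambda>x. h x * k x) absolutely_integrable_on {a..b}"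
  proof (rule absolutely_integrable_bounded_measurable_product_real)
    show "h \<in> borel_measurable (lebesgue_on {a..b})"
      using assms(3) by (rule continuous_imp_measurable_on_sets_lebesgue) auto
    show "bounded (h ` {a..b})"
      using assms(3) by (intro compact_imp_bounded compact_continuous_image) auto
    show "k absolutely_integrable_on {a..b}"
      using assms(1,2) by (rule nonnegative_absolutely_integrable_1)
  qed auto
  then show ?thesis
    by (simp add: mult.commute)
qed

lemma powr_le_exp:
  fixes x b :: real
  assumes "0 < x" "0 < b" "b \<le> 1"
  shows "x powr b \<le> exp x"
proof -
  have "x powr b \<le> 1 + x"
  proof (cases "x \<le> 1")
    case True
    then have "x powr b \<le> 1 powr b"
      using assms by (intro powr_mono2) auto
    then show ?thesis
      using assms by simp
  next
    case False
    then have "x powr b \<le> x powr 1"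
      using assms by (intro powr_mono) auto
    then show ?thesis
      using assms by simp
  qed
  also have "\<dots> \<le> exp x"
    by (rule exp_ge_add_one_self)
  finally show ?thesis .
qed

lemma powr_le_if_small:
  fixes \<gamma> A e :: real
  assumes "0 < \<gamma>" "0 \<le> A" "0 < e"
  shows "\<exists>\<delta>>0. \<forall>h. 0 \<le> h \<longrightarrow> h < \<delta> \<longrightarrow> A * h powr \<gamma> \<le> e"
proof -
  define \<delta> where "\<delta> = (e / (A + 1)) powr (1 / \<gamma>)"
  have "A * h powr \<gamma> \<le> e" if "0 \<le> h" "h < \<delta>" for h
  proof -
    have "h powr \<gamma> \<le> \<delta> powr \<gamma>"
      using that assms by (intro powr_mono2) auto
    also have "\<dots> = e / (A + 1)"
      using assms by (simp add: \<delta>_def powr_powr)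
    finally have "A * h powr \<gamma> \<le> A * (e / (A + 1))"
      using assms by (intro mult_left_mono)
    also have "\<dots> = A * e / (A + 1)"
      by simp
    also have "\<dots> \<le> e"
      using assms by (subst pos_divide_le_eq) (auto simp: algebra_simps)
    finally show ?thesis .
  qed
  moreover have "0 < \<delta>"
    using assms by (simp add: \<delta>_def)
  ultimately show ?thesis
    by blast
qed

lemma powr_times_exp_neg_le:
  fixes s \<theta> \<gamma> :: real
  assumes s: "0 \<le> s" and \<theta>: "0 < \<theta>" and \<gamma>: "0 < \<gamma>" "\<gamma> \<le> 1"
  shows "s powr (\<gamma> - 1) * exp (- (\<theta> * s)) \<le> \<theta> powr (- (\<gamma> / 2)) * s powr (\<gamma> / 2 - 1)"
proof (cases "s = 0")
  case False
  with s have s: "0 < s"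
    by simp
  have "(\<theta> * s) powr (\<gamma> / 2) \<le> exp (\<theta> * s)"
    using s \<theta> \<gamma> by (intro powr_le_exp) auto
  then have "s powr (\<gamma> / 2) * exp (- (\<theta> * s)) \<le> \<theta> powr (- (\<gamma> / 2))"
    using s \<theta> by (simp add: powr_mult powr_minus exp_minus field_simps)
  then have "s powr (\<gamma> / 2 - 1) * (s powr (\<gamma> / 2) * exp (- (\<theta> * s)))
      \<le> s powr (\<gamma> / 2 - 1) * \<theta> powr (- (\<gamma> / 2))"
    by (intro mult_left_mono) auto
  moreover have "s powr (\<gamma> - 1) = s powr (\<gamma> / 2 - 1) * s powr (\<gamma> / 2)"
    using s by (simp add: powr_add[symmetric])
  ultimately show ?thesis
    by (simp add: mult_ac)
qed simp

lemma Bcontfun_clamp_apply: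
  fixes h :: "real \<Rightarrow> real"
  assumes "continuous_on {a..b} h"
  shows "apply_bcontfun (Bcontfun (\<lambda>x. h (clamp a b x))) x = h (clamp a b x)"
proof -
  obtain g :: "real \<Rightarrow>\<^sub>C real" where g: "\<And>x. g x = h (clamp a b x)"
    using continuous_on_cbox_bcontfunE[of a b h] assms by (metis cbox_interval)
  then have "(\<lambda>x. h (clamp a b x)) = apply_bcontfun g"
    by (simp add: fun_eq_iff)
  with g show ?thesis
    by (simp add: apply_bcontfun_inverse)
qed

lemma weighted_contraction_fixpoint_unique:
  fixes T :: "(real \<Rightarrow> real) \<Rightarrow> real \<Rightarrow> real" and w :: "real \<Rightarrow> real"
  assumes "c < 1"
    and w_cont: "continuous_on {a..b} w" and w_pos: "\<And>t. t \<in> {a..b} \<Longrightarrow> 0 < w t"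
    and T_contr: "\<And>z1 z2 d t. continuous_on {a..b} z1 \<Longrightarrow> continuous_on {a..b} z2 \<Longrightarrow>
        (\<And>s. s \<in> {a..b} \<Longrightarrow> w s * \<bar>z1 s - z2 s\<bar> \<le> d) \<Longrightarrow> t \<in> {a..b} \<Longrightarrow>
        w t * \<bar>T z1 t - T z2 t\<bar> \<le> c * d"
    and z1: "continuous_on {a..b} z1" "\<forall>t\<in>{a..b}. T z1 t = z1 t"
    and z2: "continuous_on {a..b} z2" "\<forall>t\<in>{a..b}. T z2 t = z2 t"
    and t: "t \<in> {a..b}"
  shows "z1 t = z2 t"
proof -
  define D where "D s = w s * \<bar>z1 s - z2 s\<bar>" for s
  have "continuous_on {a..b} D"
    unfolding D_def by (intro continuous_intros w_cont z1 z2)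
  then obtain s0 where s0: "s0 \<in> {a..b}" and D_max: "\<And>s. s \<in> {a..b} \<Longrightarrow> D s \<le> D s0"
    using continuous_attains_sup[of "{a..b}" D] t by auto
  have "D s0 \<le> c * D s0"
    using T_contr[OF z1(1) z2(1) _ s0, of "D s0"] D_max z1(2) z2(2) s0 by (simp add: D_def)
  with \<open>c < 1\<close> have "D s0 \<le> 0"
    by (smt (verit) mult_le_cancel_right1)
  with D_max[OF t] have "w t * \<bar>z1 t - z2 t\<bar> \<le> 0"
    by (simp add: D_def)
  with w_pos[OF t] show ?thesis
    by (simp add: mult_le_0_iff)
qed

text \<open>The fixed point is found in the Banach space of bounded continuous functions on the line:
  \<open>y\<close> encodes \<open>z = y / w\<close> on \<open>{a..b}\<close>, so that the sup distance of codes is the weighted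
  distance of the encoded functions.\<close>

lemma weighted_contraction_fixpoint_exists:
  fixes T :: "(real \<Rightarrow> real) \<Rightarrow> real \<Rightarrow> real" and w :: "real \<Rightarrow> real"
  assumes "a \<le> b" "0 \<le> c" "c < 1"
    and w_cont: "continuous_on {a..b} w" and w_pos: "\<And>t. t \<in> {a..b} \<Longrightarrow> 0 < w t"
    and T_cont: "\<And>z. continuous_on {a..b} z \<Longrightarrow> continuous_on {a..b} (T z)"
    and T_contr: "\<And>z1 z2 d t. continuous_on {a..b} z1 \<Longrightarrow> continuous_on {a..b} z2 \<Longrightarrow>
        (\<And>s. s \<in> {a..b} \<Longrightarrow> w s * \<bar>z1 s - z2 s\<bar> \<le> d) \<Longrightarrow> t \<in> {a..b} \<Longrightarrow>
        w t * \<bar>T z1 t - T z2 t\<bar> \<le> c * d"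
  shows "\<exists>z. continuous_on {a..b} z \<and> (\<forall>t\<in>{a..b}. T z t = z t)"
proof -
  have clamp: "clamp a b x \<in> {a..b}" for x
    using \<open>a \<le> b\<close> clamp_in_interval[of a b x] by simp
  define decode where "decode y s = y s / w s" for y :: "real \<Rightarrow>\<^sub>C real" and s
  have decode_cont: "continuous_on {a..b} (decode y)" for y
    unfolding decode_def using w_pos
    by (intro continuous_intros w_cont continuous_on_subset[OF continuous_on_apply_bcontfun])
      (auto simp: less_imp_neq[symmetric])
  define G where "G y = Bcontfun (\<lambda>x. w (clamp a b x) * T (decode y) (clamp a b x))" for y
  have G_apply: "G y x = w (clamp a b x) * T (decode y) (clamp a b x)" for y x
    unfolding G_def
    by (intro Bcontfun_clamp_apply[of a b "\<lambda>t. w t * T (decode y) t"] continuous_intros w_cont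
        T_cont decode_cont)
  have "dist (G y1) (G y2) \<le> c * dist y1 y2" for y1 y2
  proof (rule dist_bound)
    fix x
    have "w s * \<bar>decode y1 s - decode y2 s\<bar> \<le> dist y1 y2" if "s \<in> {a..b}" for s
      using dist_bounded[of y1 s y2] w_pos[OF that]
      by (simp add: decode_def dist_real_def abs_mult diff_divide_distrib[symmetric])
    then have "w t * \<bar>T (decode y1) t - T (decode y2) t\<bar> \<le> c * dist y1 y2" if "t \<in> {a..b}" for t
      using T_contr decode_cont that by blast
    then show "dist (G y1 x) (G y2 x) \<le> c * dist y1 y2"
      using clamp w_pos[OF clamp]
      by (simp add: G_apply dist_real_def abs_mult abs_of_pos right_diff_distrib[symmetric])
  qed
  then obtain y where "G y = y"
    using banach_fix_type[of c G] \<open>0 \<le> c\<close> \<open>c < 1\<close> by blast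
  then have "T (decode y) t = decode y t" if "t \<in> {a..b}" for t
  proof -
    have "clamp a b t = t"
      using that clamp_cancel_cbox[of t a b] by (simp add: cbox_interval)
    with \<open>G y = y\<close> have "y t = w t * T (decode y) t"
      by (metis G_apply)
    with w_pos[OF that] show ?thesis
      by (simp add: decode_def field_simps)
  qed
  with decode_cont show ?thesis
    by blast
qed

lemma abs_mult_diff_le:
  fixes a1 a2 e1 e2 g M \<omega> G :: real
  assumes "0 \<le> a2" "\<bar>e1\<bar> \<le> M" "\<bar>e2 - e1\<bar> \<le> \<omega>" "\<bar>g\<bar> \<le> G"
  shows "\<bar>a2 * e2 * g - a1 * e1 * g\<bar> \<le> G * (\<omega> * a2 + M * \<bar>a1 - a2\<bar>)"
proof -
  have "\<bar>a2 * (e2 - e1)\<bar> \<le> \<omega> * a2"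
    using assms(1,3) mult_left_mono[of "\<bar>e2 - e1\<bar>" \<omega> a2] by (simp add: abs_mult mult.commute)
  moreover have "\<bar>(a2 - a1) * e1\<bar> \<le> M * \<bar>a1 - a2\<bar>"
    using assms(2) mult_right_mono[of "\<bar>e1\<bar>" M "\<bar>a1 - a2\<bar>"]
    by (simp add: abs_mult abs_minus_commute mult.commute)
  ultimately have "\<bar>a2 * e2 - a1 * e1\<bar> \<le> \<omega> * a2 + M * \<bar>a1 - a2\<bar>"
    using abs_triangle_ineq[of "a2 * (e2 - e1)" "(a2 - a1) * e1"] by (simp add: algebra_simps)
  then have "\<bar>a2 * e2 - a1 * e1\<bar> * \<bar>g\<bar> \<le> (\<omega> * a2 + M * \<bar>a1 - a2\<bar>) * G"
    using assms(4) by (intro mult_mono) auto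
  moreover have "a2 * e2 * g - a1 * e1 * g = (a2 * e2 - a1 * e1) * g"
    by (simp add: left_diff_distrib)
  ultimately show ?thesis
    by (simp add: abs_mult mult.commute)
qed

locale phi_scale =
  fixes m n :: real and \<Phi> \<Phi>' :: "real \<Rightarrow> real"
  assumes m_less_n: "m < n"
    and Phi_mono: "mono_on {m..n} \<Phi>"
    and Phi_deriv: "\<And>l. l \<in> {m..n} \<Longrightarrow> (\<Phi> has_real_derivative \<Phi>' l) (at l within {m..n})"
    and Phi'_nonzero: "\<And>l. l \<in> {m..n} \<Longrightarrow> \<Phi>' l \<noteq> 0"
begin

lemma Phi_continuous: "continuous_on {m..n} \<Phi>"
  using Phi_deriv DERIV_continuous continuous_on_eq_continuous_within by blast

lemma Phi_deriv_at: "l \<in> {m<..<n} \<Longrightarrow> (\<Phi> has_real_derivative \<Phi>' l) (at l)"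
  using Phi_deriv[of l] at_within_interior[of l "{m..n}"] by auto

lemma Phi_le: "x \<in> {m..n} \<Longrightarrow> y \<in> {m..n} \<Longrightarrow> x \<le> y \<Longrightarrow> \<Phi> x \<le> \<Phi> y"
  using Phi_mono by (rule mono_onD)

lemma Phi_less: "x \<in> {m..n} \<Longrightarrow> y \<in> {m..n} \<Longrightarrow> x < y \<Longrightarrow> \<Phi> x < \<Phi> y"
  using strict_mono_on_if_deriv_nonzero[OF Phi_mono Phi_deriv_at] Phi'_nonzero
  by (simp add: strict_mono_onD)

lemma Phi'_nonneg: "l \<in> {m..n} \<Longrightarrow> 0 \<le> \<Phi>' l"
  using mono_on_has_real_derivative_nonneg[OF Phi_mono m_less_n _ Phi_deriv] by blast

lemma Phi_diff_range: "l \<in> {m..n} \<Longrightarrow> \<eta> \<in> {m..l} \<Longrightarrow> \<Phi> l - \<Phi> \<eta> \<in> {0..\<Phi> n - \<Phi> m}"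
  using Phi_le[of \<eta> l] Phi_le[of m \<eta>] Phi_le[of l n] by auto

definition kernel :: "real \<Rightarrow> real \<Rightarrow> real \<Rightarrow> real" where
  "kernel \<gamma> l \<eta> = \<Phi>' \<eta> * (\<Phi> l - \<Phi> \<eta>) powr (\<gamma> - 1)"

lemma kernel_nonneg: "l \<le> n \<Longrightarrow> \<eta> \<in> {m..l} \<Longrightarrow> 0 \<le> kernel \<gamma> l \<eta>"
  unfolding kernel_def using Phi'_nonneg[of \<eta>] by auto

lemma has_integral_kernel:
  assumes \<gamma>: "0 < \<gamma>" and ab: "m \<le> a" "a \<le> b" "b \<le> l" "l \<le> n"
  shows "(kernel \<gamma> l has_integral ((\<Phi> l - \<Phi> a) powr \<gamma> - (\<Phi> l - \<Phi> b) powr \<gamma>) / \<gamma>) {a..b}"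
proof -
  define F where "F \<eta> = - ((\<Phi> l - \<Phi> \<eta>) powr \<gamma> / \<gamma>)" for \<eta>
  have sub: "{a..b} \<subseteq> {m..n}"
    using ab by auto
  have "(kernel \<gamma> l has_integral (F b - F a)) {a..b}"
  proof (rule fundamental_theorem_of_calculus_interior)
    show "continuous_on {a..b} F"
      unfolding F_def using sub ab \<gamma>
      by (intro continuous_intros continuous_on_powr' continuous_on_subset[OF Phi_continuous sub])
        (auto intro!: Phi_le)
    fix x
    assume x: "x \<in> {a<..<b}"
    then have "0 < \<Phi> l - \<Phi> x"
      using Phi_less[of x l] ab by auto
    moreover have "x \<in> {m<..<n}"
      using x ab by auto
    ultimately have "(F has_real_derivative kernel \<gamma> l x) (at x)"
      unfolding F_def kernel_def using \<gamma>
      by (auto intro!: derivative_eq_intros Phi_deriv_at simp: field_simps)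
    then show "(F has_vector_derivative kernel \<gamma> l x) (at x)"
      by (simp add: has_real_derivative_iff_has_vector_derivative)
  qed (use ab in simp)
  then show ?thesis
    unfolding F_def by (simp add: diff_divide_distrib)
qed

lemma has_integral_kernel_upto:
  "0 < \<gamma> \<Longrightarrow> l \<in> {m..n} \<Longrightarrow> c \<in> {m..l} \<Longrightarrow>
    (kernel \<gamma> l has_integral (\<Phi> l - \<Phi> c) powr \<gamma> / \<gamma>) {c..l}"
  using has_integral_kernel[of \<gamma> c l l] by simp

lemma kernel_antimono:
  assumes "\<gamma> \<le> 1" "l2 \<in> {m..n}" "l1 \<le> l2" "\<eta> \<in> {m..<l1}"
  shows "kernel \<gamma> l2 \<eta> \<le> kernel \<gamma> l1 \<eta>"
proof -
  have "0 < \<Phi> l1 - \<Phi> \<eta>" "\<Phi> l1 - \<Phi> \<eta> \<le> \<Phi> l2 - \<Phi> \<eta>"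
    using Phi_less[of \<eta> l1] Phi_le[of l1 l2] assms by auto
  then have "(\<Phi> l2 - \<Phi> \<eta>) powr (\<gamma> - 1) \<le> (\<Phi> l1 - \<Phi> \<eta>) powr (\<gamma> - 1)"
    using assms(1) by (intro powr_mono2') auto
  then show ?thesis
    unfolding kernel_def using Phi'_nonneg[of \<eta>] assms by (auto intro: mult_left_mono)
qed

text \<open>For \<open>\<gamma> \<le> 1\<close> the kernel decreases in \<open>l\<close> on \<open>{m..<l1}\<close>, so the integral of the
  absolute difference telescopes; the point \<open>l1\<close> is an exception only because there
  \<open>kernel \<gamma> l1 l1 = 0\<close> (as \<open>0 powr x = 0\<close>).\<close>

lemma has_integral_kernel_abs_diff:
  assumes \<gamma>: "0 < \<gamma>" "\<gamma> \<le> 1" and l: "l1 \<in> {m..n}" "l2 \<in> {m..n}" "l1 \<le> l2"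
  shows "((\<lambda>\<eta>. \<bar>kernel \<gamma> l1 \<eta> - kernel \<gamma> l2 \<eta>\<bar>) has_integral
    ((\<Phi> l1 - \<Phi> m) powr \<gamma> + (\<Phi> l2 - \<Phi> l1) powr \<gamma> - (\<Phi> l2 - \<Phi> m) powr \<gamma>) / \<gamma>) {m..l1}"
proof -
  have "((\<lambda>\<eta>. kernel \<gamma> l1 \<eta> - kernel \<gamma> l2 \<eta>) has_integral
      (\<Phi> l1 - \<Phi> m) powr \<gamma> / \<gamma> - ((\<Phi> l2 - \<Phi> m) powr \<gamma> - (\<Phi> l2 - \<Phi> l1) powr \<gamma>) / \<gamma>) {m..l1}"
    using l by (intro has_integral_diff has_integral_kernel_upto has_integral_kernel \<gamma>) auto
  then have "((\<lambda>\<eta>. kernel \<gamma> l1 \<eta> - kernel \<gamma> l2 \<eta>) has_integral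
      ((\<Phi> l1 - \<Phi> m) powr \<gamma> + (\<Phi> l2 - \<Phi> l1) powr \<gamma> - (\<Phi> l2 - \<Phi> m) powr \<gamma>) / \<gamma>) {m..l1}"
    by (rule has_integral_eq_rhs) (simp add: diff_divide_distrib add_divide_distrib)
  moreover have "\<bar>kernel \<gamma> l1 \<eta> - kernel \<gamma> l2 \<eta>\<bar> = kernel \<gamma> l1 \<eta> - kernel \<gamma> l2 \<eta>"
    if "\<eta> \<in> {m..l1} - {l1}" for \<eta>
    using kernel_antimono[of \<gamma> l2 l1 \<eta>] that \<gamma> l by auto
  ultimately show ?thesis
    by (subst has_integral_spike_finite_eq[of "{l1}"]) auto
qed

lemma absolutely_integrable_kernel_times:
  assumes "0 < \<gamma>" "l \<in> {m..n}" "c \<in> {m..l}" "continuous_on {c..l} h"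
  shows "(\<lambda>\<eta>. kernel \<gamma> l \<eta> * h \<eta>) absolutely_integrable_on {c..l}"
  using has_integral_kernel_upto[OF assms(1-3)] kernel_nonneg[of l] assms
  by (intro absolutely_integrable_nonneg_times_continuous) auto

lemma integral_kernel_times_le:
  assumes "0 < \<gamma>" "l \<in> {m..n}" "c \<in> {m..l}" "continuous_on {c..l} h"
    and h: "\<And>\<eta>. \<eta> \<in> {c..l} \<Longrightarrow> \<bar>h \<eta>\<bar> \<le> B"
  shows "\<bar>integral {c..l} (\<lambda>\<eta>. kernel \<gamma> l \<eta> * h \<eta>)\<bar> \<le> B * ((\<Phi> l - \<Phi> c) powr \<gamma> / \<gamma>)"
proof -
  have kernel_B: "((\<lambda>\<eta>. kernel \<gamma> l \<eta> * B) has_integral (\<Phi> l - \<Phi> c) powr \<gamma> / \<gamma> * B) {c..l}"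
    using has_integral_kernel_upto[OF assms(1-3)] by (rule has_integral_mult_left)
  have "norm (integral {c..l} (\<lambda>\<eta>. kernel \<gamma> l \<eta> * h \<eta>)) \<le> integral {c..l} (\<lambda>\<eta>. kernel \<gamma> l \<eta> * B)"
  proof (rule integral_norm_bound_integral)
    show "(\<lambda>\<eta>. kernel \<gamma> l \<eta> * h \<eta>) integrable_on {c..l}"
      using absolutely_integrable_kernel_times[OF assms(1-4)] by (simp add: absolutely_integrable_on_def)
    show "(\<lambda>\<eta>. kernel \<gamma> l \<eta> * B) integrable_on {c..l}"
      using kernel_B by blast
    fix \<eta>
    assume "\<eta> \<in> {c..l}"
    then show "norm (kernel \<gamma> l \<eta> * h \<eta>) \<le> kernel \<gamma> l \<eta> * B"
      using h kernel_nonneg[of l \<eta> \<gamma>] assms(2,3) by (simp add: abs_mult mult_left_mono)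
  qed
  with integral_unique[OF kernel_B] show ?thesis
    by (simp add: mult.commute)
qed


lemma continuous_on_comp_Phi_diff:
  assumes "continuous_on {0..\<Phi> n - \<Phi> m} E" "l \<in> {m..n}"
  shows "continuous_on {m..l} (\<lambda>\<eta>. E (\<Phi> l - \<Phi> \<eta>))"
proof (rule continuous_on_compose2[OF assms(1)])
  show "continuous_on {m..l} (\<lambda>\<eta>. \<Phi> l - \<Phi> \<eta>)"
    using assms(2) by (intro continuous_intros continuous_on_subset[OF Phi_continuous]) auto
  show "(\<lambda>\<eta>. \<Phi> l - \<Phi> \<eta>) ` {m..l} \<subseteq> {0..\<Phi> n - \<Phi> m}"
    using Phi_diff_range assms(2) by auto
qed

definition kernel_integral :: "real \<Rightarrow> (real \<Rightarrow> real) \<Rightarrow> (real \<Rightarrow> real) \<Rightarrow> real \<Rightarrow> real" where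
  "kernel_integral \<gamma> E g l = integral {m..l} (\<lambda>\<eta>. kernel \<gamma> l \<eta> * E (\<Phi> l - \<Phi> \<eta>) * g \<eta>)"

lemma kernel_integral_at_m [simp]: "kernel_integral \<gamma> E g m = 0"
  by (simp add: kernel_integral_def)

lemma integrable_kernel_comp_times:
  assumes "0 < \<gamma>" "continuous_on {0..\<Phi> n - \<Phi> m} E" "l \<in> {m..n}" "c \<in> {m..l}"
    and "continuous_on {c..l} g"
  shows "(\<lambda>\<eta>. kernel \<gamma> l \<eta> * E (\<Phi> l - \<Phi> \<eta>) * g \<eta>) integrable_on {c..l}"
proof -
  have "continuous_on {c..l} (\<lambda>\<eta>. E (\<Phi> l - \<Phi> \<eta>) * g \<eta>)"
    using assms by (intro continuous_intros continuous_on_subset[OF continuous_on_comp_Phi_diff]) auto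
  from absolutely_integrable_kernel_times[OF assms(1,3,4) this] show ?thesis
    by (simp add: absolutely_integrable_on_def mult.assoc)
qed

lemma kernel_integral_diff:
  assumes "0 < \<gamma>" "continuous_on {0..\<Phi> n - \<Phi> m} E" "l \<in> {m..n}"
    and "continuous_on {m..l} g1" "continuous_on {m..l} g2"
  shows "kernel_integral \<gamma> E g1 l - kernel_integral \<gamma> E g2 l =
    kernel_integral \<gamma> E (\<lambda>\<eta>. g1 \<eta> - g2 \<eta>) l"
  using integral_diff[OF integrable_kernel_comp_times[OF assms(1-3) _ assms(4)]
      integrable_kernel_comp_times[OF assms(1-3) _ assms(5)]] assms(3)
  by (simp add: kernel_integral_def right_diff_distrib)

lemma integral_kernel_comp_times_diff_le:
  assumes \<gamma>: "0 < \<gamma>" "\<gamma> \<le> 1"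
    and E: "continuous_on {0..\<Phi> n - \<Phi> m} E" "\<And>s. s \<in> {0..\<Phi> n - \<Phi> m} \<Longrightarrow> \<bar>E s\<bar> \<le> M"
    and E_osc: "\<And>s1 s2. s1 \<in> {0..\<Phi> n - \<Phi> m} \<Longrightarrow> s2 \<in> {0..\<Phi> n - \<Phi> m} \<Longrightarrow>
        \<bar>s2 - s1\<bar> \<le> \<Phi> l2 - \<Phi> l1 \<Longrightarrow> \<bar>E s2 - E s1\<bar> \<le> \<omega>"
    and g: "continuous_on {m..n} g" "\<And>\<eta>. \<eta> \<in> {m..n} \<Longrightarrow> \<bar>g \<eta>\<bar> \<le> G"
    and l: "l1 \<in> {m..n}" "l2 \<in> {m..n}" "l1 \<le> l2"
  shows "\<bar>integral {m..l1} (\<lambda>\<eta>. kernel \<gamma> l2 \<eta> * E (\<Phi> l2 - \<Phi> \<eta>) * g \<eta>) - kernel_integral \<gamma> E g l1\<bar>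
    \<le> G * (\<omega> * ((\<Phi> n - \<Phi> m) powr \<gamma> / \<gamma>) + M * ((\<Phi> l2 - \<Phi> l1) powr \<gamma> / \<gamma>))"
proof -
  define A where "A l \<eta> = kernel \<gamma> l \<eta> * E (\<Phi> l - \<Phi> \<eta>) * g \<eta>" for l \<eta>
  define W where "W = ((\<Phi> l2 - \<Phi> m) powr \<gamma> - (\<Phi> l2 - \<Phi> l1) powr \<gamma>) / \<gamma>"
  define V where "V = ((\<Phi> l1 - \<Phi> m) powr \<gamma> + (\<Phi> l2 - \<Phi> l1) powr \<gamma> - (\<Phi> l2 - \<Phi> m) powr \<gamma>) / \<gamma>"
  have g_on: "continuous_on {m..l} g" if "l \<le> n" for l
    using that by (intro continuous_on_subset[OF g(1)]) auto
  have "A l2 integrable_on {m..l2}"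
    unfolding A_def using l by (intro integrable_kernel_comp_times \<gamma> E g_on) auto
  then have A2: "A l2 integrable_on {m..l1}"
    by (rule integrable_subinterval_real) (use l in auto)
  have A1: "A l1 integrable_on {m..l1}"
    unfolding A_def using l by (intro integrable_kernel_comp_times \<gamma> E g_on) auto
  have bound: "\<bar>A l2 \<eta> - A l1 \<eta>\<bar> \<le> G * (\<omega> * kernel \<gamma> l2 \<eta> + M * \<bar>kernel \<gamma> l1 \<eta> - kernel \<gamma> l2 \<eta>\<bar>)"
    if "\<eta> \<in> {m..l1}" for \<eta>
    unfolding A_def using that l Phi_diff_range[of l1 \<eta>] Phi_diff_range[of l2 \<eta>] Phi_le[of l1 l2]
    by (intro abs_mult_diff_le kernel_nonneg E E_osc g) auto
  have bound_int: "((\<lambda>\<eta>. G * (\<omega> * kernel \<gamma> l2 \<eta> + M * \<bar>kernel \<gamma> l1 \<eta> - kernel \<gamma> l2 \<eta>\<bar>))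
      has_integral G * (\<omega> * W + M * V)) {m..l1}"
    unfolding W_def V_def using l
    by (intro has_integral_mult_right has_integral_add has_integral_kernel has_integral_kernel_abs_diff \<gamma>)
      auto
  have "norm (integral {m..l1} (\<lambda>\<eta>. A l2 \<eta> - A l1 \<eta>)) \<le>
      integral {m..l1} (\<lambda>\<eta>. G * (\<omega> * kernel \<gamma> l2 \<eta> + M * \<bar>kernel \<gamma> l1 \<eta> - kernel \<gamma> l2 \<eta>\<bar>))"
    using bound
    by (intro integral_norm_bound_integral integrable_diff A2 A1 has_integral_integrable[OF bound_int]) auto
  then have "\<bar>integral {m..l1} (\<lambda>\<eta>. A l2 \<eta> - A l1 \<eta>)\<bar> \<le> G * (\<omega> * W + M * V)"
    by (simp only: integral_unique[OF bound_int] real_norm_def)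
  moreover have "(\<Phi> l2 - \<Phi> m) powr \<gamma> \<le> (\<Phi> n - \<Phi> m) powr \<gamma>"
    "(\<Phi> l1 - \<Phi> m) powr \<gamma> \<le> (\<Phi> l2 - \<Phi> m) powr \<gamma>"
    using Phi_le[of m l1] Phi_le[of l1 l2] Phi_le[of l2 n] l \<gamma> by (auto intro!: powr_mono2)
  then have "W \<le> (\<Phi> n - \<Phi> m) powr \<gamma> / \<gamma>" "V \<le> (\<Phi> l2 - \<Phi> l1) powr \<gamma> / \<gamma>"
    unfolding W_def V_def using \<gamma> powr_ge_zero[of "\<Phi> l2 - \<Phi> l1" \<gamma>]
    by (intro divide_right_mono; linarith)+
  moreover have "0 \<le> G" "0 \<le> M" "0 \<le> \<omega>"
    using g(2)[of m] E(2)[of 0] E_osc[of 0 0] Phi_le[of m n] Phi_le[of l1 l2] l m_less_n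
    by (auto intro: order_trans[OF abs_ge_zero])
  ultimately show ?thesis
    unfolding kernel_integral_def A_def[symmetric] integral_diff[OF A2 A1, symmetric]
    by (smt (verit) mult_left_mono)
qed


lemma kernel_integral_increment_le:
  assumes \<gamma>: "0 < \<gamma>" "\<gamma> \<le> 1"
    and E: "continuous_on {0..\<Phi> n - \<Phi> m} E" "\<And>s. s \<in> {0..\<Phi> n - \<Phi> m} \<Longrightarrow> \<bar>E s\<bar> \<le> M"
    and E_osc: "\<And>s1 s2. s1 \<in> {0..\<Phi> n - \<Phi> m} \<Longrightarrow> s2 \<in> {0..\<Phi> n - \<Phi> m} \<Longrightarrow>
        \<bar>s2 - s1\<bar> \<le> \<bar>\<Phi> l2 - \<Phi> l1\<bar> \<Longrightarrow> \<bar>E s2 - E s1\<bar> \<le> \<omega>"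
    and g: "continuous_on {m..n} g" "\<And>\<eta>. \<eta> \<in> {m..n} \<Longrightarrow> \<bar>g \<eta>\<bar> \<le> G"
    and l: "l1 \<in> {m..n}" "l2 \<in> {m..n}" "l1 \<le> l2"
  shows "\<bar>kernel_integral \<gamma> E g l2 - kernel_integral \<gamma> E g l1\<bar>
    \<le> G * (2 * M * (\<bar>\<Phi> l2 - \<Phi> l1\<bar> powr \<gamma> / \<gamma>) + \<omega> * ((\<Phi> n - \<Phi> m) powr \<gamma> / \<gamma>))"
proof -
  have h: "\<bar>\<Phi> l2 - \<Phi> l1\<bar> = \<Phi> l2 - \<Phi> l1"
    using Phi_le[OF l] by simp
  define A where "A \<eta> = kernel \<gamma> l2 \<eta> * E (\<Phi> l2 - \<Phi> \<eta>) * g \<eta>" for \<eta>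
  have "A integrable_on {m..l2}"
    unfolding A_def using l by (intro integrable_kernel_comp_times \<gamma> E continuous_on_subset[OF g(1)]) auto
  then have "kernel_integral \<gamma> E g l2 = integral {m..l1} A + integral {l1..l2} A"
    unfolding kernel_integral_def A_def[symmetric]
    using Henstock_Kurzweil_Integration.integral_combine[of m l1 l2 A] l by simp
  moreover have "\<bar>integral {l1..l2} A\<bar> \<le> M * G * ((\<Phi> l2 - \<Phi> l1) powr \<gamma> / \<gamma>)"
  proof -
    have "\<bar>E (\<Phi> l2 - \<Phi> \<eta>) * g \<eta>\<bar> \<le> M * G" if "\<eta> \<in> {l1..l2}" for \<eta>
      using E(2)[OF Phi_diff_range[of l2 \<eta>]] g(2)[of \<eta>] that l by (simp add: abs_mult mult_mono')
    then have "\<bar>integral {l1..l2} (\<lambda>\<eta>. kernel \<gamma> l2 \<eta> * (E (\<Phi> l2 - \<Phi> \<eta>) * g \<eta>))\<bar>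
        \<le> M * G * ((\<Phi> l2 - \<Phi> l1) powr \<gamma> / \<gamma>)"
      using l by (intro integral_kernel_times_le \<gamma> continuous_intros continuous_on_subset[OF g(1)]
          continuous_on_subset[OF continuous_on_comp_Phi_diff[OF E(1)]]) auto
    then show ?thesis
      unfolding A_def by (simp add: mult.assoc)
  qed
  moreover have "\<bar>integral {m..l1} A - kernel_integral \<gamma> E g l1\<bar>
      \<le> G * (\<omega> * ((\<Phi> n - \<Phi> m) powr \<gamma> / \<gamma>) + M * ((\<Phi> l2 - \<Phi> l1) powr \<gamma> / \<gamma>))"
    unfolding A_def using l E_osc[unfolded h]
    by (intro integral_kernel_comp_times_diff_le \<gamma> E g) auto
  ultimately have "\<bar>kernel_integral \<gamma> E g l2 - kernel_integral \<gamma> E g l1\<bar>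
      \<le> M * G * ((\<Phi> l2 - \<Phi> l1) powr \<gamma> / \<gamma>)
        + G * (\<omega> * ((\<Phi> n - \<Phi> m) powr \<gamma> / \<gamma>) + M * ((\<Phi> l2 - \<Phi> l1) powr \<gamma> / \<gamma>))"
    by linarith
  also have "\<dots> = G * (2 * M * (\<bar>\<Phi> l2 - \<Phi> l1\<bar> powr \<gamma> / \<gamma>) + \<omega> * ((\<Phi> n - \<Phi> m) powr \<gamma> / \<gamma>))"
    unfolding h by (simp add: algebra_simps)
  finally show ?thesis .
qed

lemma kernel_integral_oscillation_le:
  assumes \<gamma>: "0 < \<gamma>" "\<gamma> \<le> 1"
    and E: "continuous_on {0..\<Phi> n - \<Phi> m} E" "\<And>s. s \<in> {0..\<Phi> n - \<Phi> m} \<Longrightarrow> \<bar>E s\<bar> \<le> M"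
    and E_osc: "\<And>s1 s2. s1 \<in> {0..\<Phi> n - \<Phi> m} \<Longrightarrow> s2 \<in> {0..\<Phi> n - \<Phi> m} \<Longrightarrow>
        \<bar>s2 - s1\<bar> \<le> \<bar>\<Phi> l2 - \<Phi> l1\<bar> \<Longrightarrow> \<bar>E s2 - E s1\<bar> \<le> \<omega>"
    and g: "continuous_on {m..n} g" "\<And>\<eta>. \<eta> \<in> {m..n} \<Longrightarrow> \<bar>g \<eta>\<bar> \<le> G"
    and l: "l1 \<in> {m..n}" "l2 \<in> {m..n}"
  shows "\<bar>kernel_integral \<gamma> E g l2 - kernel_integral \<gamma> E g l1\<bar>
    \<le> G * (2 * M * (\<bar>\<Phi> l2 - \<Phi> l1\<bar> powr \<gamma> / \<gamma>) + \<omega> * ((\<Phi> n - \<Phi> m) powr \<gamma> / \<gamma>))"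
proof (cases "l1 \<le> l2")
  case True
  show ?thesis
    using kernel_integral_increment_le[OF \<gamma> E E_osc g l True] .
next
  case False
  have "\<bar>kernel_integral \<gamma> E g l1 - kernel_integral \<gamma> E g l2\<bar>
      \<le> G * (2 * M * (\<bar>\<Phi> l1 - \<Phi> l2\<bar> powr \<gamma> / \<gamma>) + \<omega> * ((\<Phi> n - \<Phi> m) powr \<gamma> / \<gamma>))"
    using False by (intro kernel_integral_increment_le[OF \<gamma> E _ g l(2,1)] E_osc) (auto simp: abs_minus_commute)
  then show ?thesis
    by (simp add: abs_minus_commute)
qed

lemma kernel_integral_close:
  assumes \<gamma>: "0 < \<gamma>" "\<gamma> \<le> 1" and E: "continuous_on {0..\<Phi> n - \<Phi> m} E"
    and g: "continuous_on {m..n} g" and e: "0 < e"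
  shows "\<exists>\<delta>>0. \<forall>l1\<in>{m..n}. \<forall>l2\<in>{m..n}. \<bar>\<Phi> l2 - \<Phi> l1\<bar> < \<delta> \<longrightarrow>
    \<bar>kernel_integral \<gamma> E g l2 - kernel_integral \<gamma> E g l1\<bar> < e"
proof -
  define C where "C = (\<Phi> n - \<Phi> m) powr \<gamma> / \<gamma>"
  have C: "0 \<le> C"
    using \<gamma> by (simp add: C_def)
  obtain M where M: "\<And>s. s \<in> {0..\<Phi> n - \<Phi> m} \<Longrightarrow> \<bar>E s\<bar> \<le> M" and "0 \<le> M"
    using continuous_on_compact_bound[OF compact_Icc E] by (metis real_norm_def)
  obtain G where G: "0 < G" "\<And>\<eta>. \<eta> \<in> {m..n} \<Longrightarrow> \<bar>g \<eta>\<bar> \<le> G"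
    using compact_imp_bounded[OF compact_continuous_image[OF g compact_Icc]]
    by (auto simp: bounded_pos)
  define \<omega> where "\<omega> = e / (2 * G * (C + 1))"
  have "0 < \<omega>"
    using e G C by (simp add: \<omega>_def)
  moreover have "uniformly_continuous_on {0..\<Phi> n - \<Phi> m} E"
    using E by (rule compact_uniformly_continuous) auto
  ultimately obtain \<delta>1 where "0 < \<delta>1" and E_osc: "\<And>s1 s2. s1 \<in> {0..\<Phi> n - \<Phi> m} \<Longrightarrow>
      s2 \<in> {0..\<Phi> n - \<Phi> m} \<Longrightarrow> dist s2 s1 < \<delta>1 \<Longrightarrow> dist (E s2) (E s1) < \<omega>"
    unfolding uniformly_continuous_on_def by metis
  obtain \<delta>2 where "0 < \<delta>2" and small: "\<And>h. 0 \<le> h \<Longrightarrow> h < \<delta>2 \<Longrightarrow> 2 * G * M / \<gamma> * h powr \<gamma> \<le> e / 2"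
    using powr_le_if_small[of \<gamma> "2 * G * M / \<gamma>" "e / 2"] \<gamma> G(1) \<open>0 \<le> M\<close> e by auto
  have "\<bar>kernel_integral \<gamma> E g l2 - kernel_integral \<gamma> E g l1\<bar> < e"
    if l: "l1 \<in> {m..n}" "l2 \<in> {m..n}" and h: "\<bar>\<Phi> l2 - \<Phi> l1\<bar> < min \<delta>1 \<delta>2" for l1 l2
  proof -
    have osc: "\<bar>E s2 - E s1\<bar> \<le> \<omega>"
      if "s1 \<in> {0..\<Phi> n - \<Phi> m}" "s2 \<in> {0..\<Phi> n - \<Phi> m}" "\<bar>s2 - s1\<bar> \<le> \<bar>\<Phi> l2 - \<Phi> l1\<bar>" for s1 s2
      using E_osc[OF that(1,2)] that(3) h by (simp add: dist_real_def)
    have "\<bar>kernel_integral \<gamma> E g l2 - kernel_integral \<gamma> E g l1\<bar>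
        \<le> 2 * G * M / \<gamma> * \<bar>\<Phi> l2 - \<Phi> l1\<bar> powr \<gamma> + G * \<omega> * C"
      using kernel_integral_oscillation_le[OF \<gamma> E(1) M osc g G(2) l]
      by (simp add: C_def algebra_simps)
    also have "\<dots> < e / 2 + e / 2"
    proof (rule add_le_less_mono)
      show "2 * G * M / \<gamma> * \<bar>\<Phi> l2 - \<Phi> l1\<bar> powr \<gamma> \<le> e / 2"
        using h by (intro small) auto
      have "G * \<omega> * C = e / 2 * (C / (C + 1))"
        using G C by (simp add: \<omega>_def field_simps add_nonneg_eq_0_iff)
      also have "\<dots> < e / 2"
        using C e by (simp add: field_simps)
      finally show "G * \<omega> * C < e / 2" .
    qed
    finally show ?thesis
      by simp
  qed
  with \<open>0 < \<delta>1\<close> \<open>0 < \<delta>2\<close> show ?thesis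
    by (intro exI[of _ "min \<delta>1 \<delta>2"]) auto
qed

lemma continuous_on_kernel_integral:
  assumes "0 < \<gamma>" "\<gamma> \<le> 1" "continuous_on {0..\<Phi> n - \<Phi> m} E" "continuous_on {m..n} g"
  shows "continuous_on {m..n} (kernel_integral \<gamma> E g)"
  unfolding continuous_on_iff
proof (intro ballI allI impI)
  fix x e :: real
  assume x: "x \<in> {m..n}" and "0 < e"
  then obtain \<delta> where "0 < \<delta>" and close: "\<forall>l1\<in>{m..n}. \<forall>l2\<in>{m..n}. \<bar>\<Phi> l2 - \<Phi> l1\<bar> < \<delta> \<longrightarrow>
      \<bar>kernel_integral \<gamma> E g l2 - kernel_integral \<gamma> E g l1\<bar> < e"
    using kernel_integral_close[OF assms] by blast
  then obtain d where "0 < d" and "\<forall>y\<in>{m..n}. dist y x < d \<longrightarrow> dist (\<Phi> y) (\<Phi> x) < \<delta>"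
    using Phi_continuous x unfolding continuous_on_iff by metis
  with close x show "\<exists>d>0. \<forall>y\<in>{m..n}. dist y x < d \<longrightarrow>
      dist (kernel_integral \<gamma> E g y) (kernel_integral \<gamma> E g x) < e"
    by (auto simp: dist_real_def)
qed

text \<open>Bielecki's trick: the factor \<open>exp (- \<theta> s)\<close> absorbs half of the singularity \<open>s powr (\<gamma> - 1)\<close>
  at the price \<open>\<theta> powr (- \<gamma> / 2)\<close>, which is small for large \<open>\<theta>\<close>.\<close>

lemma kernel_times_weighted_le:
  assumes \<gamma>: "0 < \<gamma>" "\<gamma> \<le> 1" and \<theta>: "0 < \<theta>" and l: "l \<in> {m..n}" and \<eta>: "\<eta> \<in> {m..l}"
    and "0 \<le> M" "0 \<le> D" "\<bar>e\<bar> \<le> M" "\<bar>g\<bar> \<le> D * exp (\<theta> * \<Phi> \<eta>)"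
  shows "\<bar>kernel \<gamma> l \<eta> * e * g\<bar> \<le> M * D * exp (\<theta> * \<Phi> l) * \<theta> powr (- (\<gamma> / 2)) * kernel (\<gamma> / 2) l \<eta>"
proof -
  define s where "s = \<Phi> l - \<Phi> \<eta>"
  have s: "0 \<le> s"
    using Phi_diff_range[OF l \<eta>] by (simp add: s_def)
  have "\<bar>e\<bar> * \<bar>g\<bar> \<le> M * (D * exp (\<theta> * \<Phi> \<eta>))"
    using assms by (intro mult_mono') auto
  then have "\<bar>kernel \<gamma> l \<eta> * e * g\<bar> \<le> kernel \<gamma> l \<eta> * (M * (D * exp (\<theta> * \<Phi> \<eta>)))"
    using kernel_nonneg[of l \<eta> \<gamma>] l \<eta> by (simp add: abs_mult mult.assoc mult_left_mono)
  also have "\<dots> = M * D * exp (\<theta> * \<Phi> l) * (\<Phi>' \<eta> * (s powr (\<gamma> - 1) * exp (- (\<theta> * s))))"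
    by (simp add: kernel_def s_def algebra_simps flip: exp_add)
  also have "\<dots> \<le> M * D * exp (\<theta> * \<Phi> l) * (\<Phi>' \<eta> * (\<theta> powr (- (\<gamma> / 2)) * s powr (\<gamma> / 2 - 1)))"
    using powr_times_exp_neg_le[OF s \<theta> \<gamma>] Phi'_nonneg[of \<eta>] assms
    by (intro mult_left_mono) auto
  also have "\<dots> = M * D * exp (\<theta> * \<Phi> l) * \<theta> powr (- (\<gamma> / 2)) * kernel (\<gamma> / 2) l \<eta>"
    by (simp add: kernel_def s_def)
  finally show ?thesis .
qed

lemma kernel_integral_weighted_le:
  assumes \<gamma>: "0 < \<gamma>" "\<gamma> \<le> 1" and \<theta>: "0 < \<theta>"
    and E: "continuous_on {0..\<Phi> n - \<Phi> m} E" "\<And>s. s \<in> {0..\<Phi> n - \<Phi> m} \<Longrightarrow> \<bar>E s\<bar> \<le> M"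
    and l: "l \<in> {m..n}"
    and g: "continuous_on {m..l} g" "\<And>\<eta>. \<eta> \<in> {m..l} \<Longrightarrow> \<bar>g \<eta>\<bar> \<le> D * exp (\<theta> * \<Phi> \<eta>)"
  shows "exp (- (\<theta> * \<Phi> l)) * \<bar>kernel_integral \<gamma> E g l\<bar>
    \<le> M * D * \<theta> powr (- (\<gamma> / 2)) * ((\<Phi> n - \<Phi> m) powr (\<gamma> / 2) / (\<gamma> / 2))"
proof -
  define C where "C = M * D * exp (\<theta> * \<Phi> l) * \<theta> powr (- (\<gamma> / 2))"
  have "0 \<le> M"
    using E(2)[of 0] Phi_le[of m n] m_less_n by (auto intro: order_trans[OF abs_ge_zero])
  have "0 \<le> D * exp (\<theta> * \<Phi> m)"
    using g(2)[of m] l by (auto intro: order_trans[OF abs_ge_zero])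
  then have "0 \<le> D"
    by (simp add: zero_le_mult_iff)
  with \<open>0 \<le> M\<close> have C: "0 \<le> C"
    by (simp add: C_def)
  have bound_int: "((\<lambda>\<eta>. C * kernel (\<gamma> / 2) l \<eta>) has_integral
      C * ((\<Phi> l - \<Phi> m) powr (\<gamma> / 2) / (\<gamma> / 2))) {m..l}"
    using l \<gamma> by (intro has_integral_mult_right has_integral_kernel_upto) auto
  have "\<bar>kernel \<gamma> l \<eta> * E (\<Phi> l - \<Phi> \<eta>) * g \<eta>\<bar> \<le> C * kernel (\<gamma> / 2) l \<eta>" if "\<eta> \<in> {m..l}" for \<eta>
    unfolding C_def using that l Phi_diff_range[OF l that] \<open>0 \<le> M\<close> \<open>0 \<le> D\<close>
    by (intro kernel_times_weighted_le \<gamma> \<theta> E(2) g(2)) auto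
  then have "norm (kernel_integral \<gamma> E g l) \<le> integral {m..l} (\<lambda>\<eta>. C * kernel (\<gamma> / 2) l \<eta>)"
    unfolding kernel_integral_def using l
    by (intro integral_norm_bound_integral integrable_kernel_comp_times \<gamma> E g
        has_integral_integrable[OF bound_int]) auto
  also have "\<dots> \<le> C * ((\<Phi> n - \<Phi> m) powr (\<gamma> / 2) / (\<gamma> / 2))"
    unfolding integral_unique[OF bound_int] using C \<gamma> Phi_le[of m l] Phi_le[of l n] l
    by (intro mult_left_mono divide_right_mono powr_mono2) auto
  finally have "exp (- (\<theta> * \<Phi> l)) * \<bar>kernel_integral \<gamma> E g l\<bar>
      \<le> exp (- (\<theta> * \<Phi> l)) * (C * ((\<Phi> n - \<Phi> m) powr (\<gamma> / 2) / (\<gamma> / 2)))"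
    by (intro mult_left_mono) auto
  then show ?thesis
    by (simp add: C_def exp_minus field_simps)
qed

end

locale delay_problem = phi_scale +
  fixes \<sigma> \<mu> \<kappa> \<rho> L :: real and \<alpha> f :: "real \<Rightarrow> real" and Q :: "real \<Rightarrow> real \<Rightarrow> real \<Rightarrow> real"
  assumes sigma_pos: "0 < \<sigma>" and kappa_pos: "0 < \<kappa>" and kappa_less_mu: "\<kappa> < \<mu>"
    and mu_le_1: "\<mu> \<le> 1"
    and alpha_cont: "continuous_on {m - \<sigma>..m} \<alpha>"
    and f_cont: "continuous_on {m..n} f" and f_range: "f ` {m..n} \<subseteq> {m - \<sigma>..n}"
    and f_le: "\<And>l. l \<in> {m..n} \<Longrightarrow> f l \<le> l"
    and Q_cont: "continuous_on ({m..n} \<times> UNIV) (\<lambda>(l, b, a). Q l b a)"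
    and Q_lipschitz: "\<And>l a1 a2 b1 b2. l \<in> {m..n} \<Longrightarrow>
      \<bar>Q l b2 a2 - Q l b1 a1\<bar> \<le> L * (\<bar>b2 - b1\<bar> + \<bar>a2 - a1\<bar>)"
begin

definition mittag_leffler_factor :: "real \<Rightarrow> real" where
  "mittag_leffler_factor s = ML2 (\<mu> - \<kappa>) \<mu> (- \<rho> * s powr (\<mu> - \<kappa>))"

definition rhs :: "(real \<Rightarrow> real) \<Rightarrow> real \<Rightarrow> real" where
  "rhs z \<eta> = Q \<eta> (z \<eta>) (z (f \<eta>))"

definition solution_map :: "(real \<Rightarrow> real) \<Rightarrow> real \<Rightarrow> real" where
  "solution_map z l = (if l \<le> m then \<alpha> l else \<alpha> m + kernel_integral \<mu> mittag_leffler_factor (rhs z) l)"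

lemma mu_pos: "0 < \<mu>"
  using kappa_pos kappa_less_mu by simp

lemma L_nonneg: "0 \<le> L"
  using Q_lipschitz[of m 0 0 0 1] m_less_n by simp

lemma continuous_on_mittag_leffler_factor: "continuous_on {0..\<Phi> n - \<Phi> m} mittag_leffler_factor"
proof -
  have "continuous_on {0..\<Phi> n - \<Phi> m} (\<lambda>s. - \<rho> * s powr (\<mu> - \<kappa>))"
    using kappa_less_mu by (intro continuous_intros continuous_on_powr') auto
  moreover have "continuous_on UNIV (ML2 (\<mu> - \<kappa>) \<mu>)"
    using kappa_less_mu mu_pos by (intro continuous_on_ML2) auto
  ultimately show ?thesis
    unfolding mittag_leffler_factor_def using continuous_on_compose2[of UNIV "ML2 (\<mu> - \<kappa>) \<mu>"] by blast
qed

lemma mittag_leffler_factor_bounded: "\<exists>M. \<forall>s\<in>{0..\<Phi> n - \<Phi> m}. \<bar>mittag_leffler_factor s\<bar> \<le> M"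
  using compact_imp_bounded[OF compact_continuous_image[OF continuous_on_mittag_leffler_factor compact_Icc]]
  by (simp add: bounded_iff)

lemma continuous_on_rhs:
  assumes "continuous_on {m - \<sigma>..n} z"
  shows "continuous_on {m..n} (rhs z)"
proof -
  have "continuous_on {m..n} (\<lambda>\<eta>. (\<eta>, z \<eta>, z (f \<eta>)))"
    using sigma_pos continuous_on_compose2[OF assms f_cont f_range]
    by (intro continuous_intros continuous_on_subset[OF assms]) auto
  from continuous_on_compose2[OF Q_cont this] show ?thesis
    unfolding rhs_def by auto
qed

lemma continuous_on_solution_map:
  assumes "continuous_on {m - \<sigma>..n} z"
  shows "continuous_on {m - \<sigma>..n} (solution_map z)"
proof -
  have "continuous_on {m - \<sigma>..m} (solution_map z)"
    using alpha_cont by (rule continuous_on_eq) (auto simp: solution_map_def)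
  moreover have "continuous_on {m..n} (\<lambda>l. \<alpha> m + kernel_integral \<mu> mittag_leffler_factor (rhs z) l)"
    using mu_pos mu_le_1
    by (intro continuous_intros continuous_on_kernel_integral continuous_on_mittag_leffler_factor
        continuous_on_rhs assms)
  then have "continuous_on {m..n} (solution_map z)"
    by (rule continuous_on_eq) (auto simp: solution_map_def)
  moreover have "{m - \<sigma>..n} = {m - \<sigma>..m} \<union> {m..n}"
    using sigma_pos m_less_n by auto
  ultimately show ?thesis
    by (metis closed_atLeastAtMost continuous_on_closed_Un)
qed

lemma rhs_diff_le:
  assumes \<theta>: "0 \<le> \<theta>" and \<eta>: "\<eta> \<in> {m..n}"
    and z: "\<And>s. s \<in> {m - \<sigma>..n} \<Longrightarrow> \<bar>z1 s - z2 s\<bar> \<le> d * exp (\<theta> * \<Phi> (max m s))"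
  shows "\<bar>rhs z1 \<eta> - rhs z2 \<eta>\<bar> \<le> 2 * L * d * exp (\<theta> * \<Phi> \<eta>)"
proof -
  have "0 \<le> d * exp (\<theta> * \<Phi> (max m m))"
    using z[of m] sigma_pos m_less_n by (auto intro: order_trans[OF abs_ge_zero])
  then have "0 \<le> d"
    by (simp add: zero_le_mult_iff)
  have "\<bar>z1 \<eta> - z2 \<eta>\<bar> \<le> d * exp (\<theta> * \<Phi> \<eta>)"
    using z[of \<eta>] \<eta> sigma_pos by (simp add: max_absorb2)
  moreover have "\<bar>z1 (f \<eta>) - z2 (f \<eta>)\<bar> \<le> d * exp (\<theta> * \<Phi> \<eta>)"
  proof -
    have "exp (\<theta> * \<Phi> (max m (f \<eta>))) \<le> exp (\<theta> * \<Phi> \<eta>)"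
      using \<theta> \<eta> f_le[OF \<eta>] by (auto intro!: mult_left_mono Phi_le)
    then have "d * exp (\<theta> * \<Phi> (max m (f \<eta>))) \<le> d * exp (\<theta> * \<Phi> \<eta>)"
      using \<open>0 \<le> d\<close> by (rule mult_left_mono)
    moreover have "f \<eta> \<in> {m - \<sigma>..n}"
      using f_range \<eta> by blast
    ultimately show ?thesis
      using z[of "f \<eta>"] by linarith
  qed
  ultimately have "L * (\<bar>z1 \<eta> - z2 \<eta>\<bar> + \<bar>z1 (f \<eta>) - z2 (f \<eta>)\<bar>) \<le> L * (2 * d * exp (\<theta> * \<Phi> \<eta>))"
    using L_nonneg by (intro mult_left_mono) auto
  with Q_lipschitz[OF \<eta>, of "z1 \<eta>" "z1 (f \<eta>)" "z2 \<eta>" "z2 (f \<eta>)"] show ?thesis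
    by (simp add: rhs_def mult.assoc)
qed
lemma solution_map_weighted_diff_le:
  assumes \<theta>: "0 < \<theta>"
    and M: "\<And>s. s \<in> {0..\<Phi> n - \<Phi> m} \<Longrightarrow> \<bar>mittag_leffler_factor s\<bar> \<le> M"
    and z: "continuous_on {m - \<sigma>..n} z1" "continuous_on {m - \<sigma>..n} z2"
    and weighted: "\<And>s. s \<in> {m - \<sigma>..n} \<Longrightarrow> \<bar>z1 s - z2 s\<bar> \<le> d * exp (\<theta> * \<Phi> (max m s))"
    and t: "t \<in> {m<..n}"
  shows "exp (- (\<theta> * \<Phi> t)) * \<bar>solution_map z1 t - solution_map z2 t\<bar>
    \<le> M * (2 * L * d) * \<theta> powr (- (\<mu> / 2)) * ((\<Phi> n - \<Phi> m) powr (\<mu> / 2) / (\<mu> / 2))"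
proof -
  have t': "t \<in> {m..n}"
    using t by auto
  have rhs_cont: "continuous_on {m..t} (rhs z')" if "continuous_on {m - \<sigma>..n} z'" for z'
    using t by (intro continuous_on_subset[OF continuous_on_rhs[OF that]]) auto
  have "\<bar>rhs z1 \<eta> - rhs z2 \<eta>\<bar> \<le> 2 * L * d * exp (\<theta> * \<Phi> \<eta>)" if "\<eta> \<in> {m..t}" for \<eta>
    using \<theta> t that by (intro rhs_diff_le weighted) auto
  then have "exp (- (\<theta> * \<Phi> t)) *
      \<bar>kernel_integral \<mu> mittag_leffler_factor (\<lambda>\<eta>. rhs z1 \<eta> - rhs z2 \<eta>) t\<bar>
      \<le> M * (2 * L * d) * \<theta> powr (- (\<mu> / 2)) * ((\<Phi> n - \<Phi> m) powr (\<mu> / 2) / (\<mu> / 2))"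
    using mu_pos mu_le_1 \<theta> t'
    by (intro kernel_integral_weighted_le continuous_on_mittag_leffler_factor M continuous_intros
        rhs_cont z) (auto simp: mult.assoc)
  with t show ?thesis
    using kernel_integral_diff[OF mu_pos continuous_on_mittag_leffler_factor t' rhs_cont rhs_cont, OF z]
    by (simp add: solution_map_def)
qed

text \<open>Since \<open>\<Phi>\<close> is only given on \<open>{m..n}\<close>, the Bielecki weight \<open>exp (- \<theta> \<Phi> t)\<close> is frozen at
  its value at \<open>m\<close> on the initial interval.\<close>

lemma solution_map_contraction:
  obtains \<theta> where "0 < \<theta>"
    and "\<And>z1 z2 d t. continuous_on {m - \<sigma>..n} z1 \<Longrightarrow> continuous_on {m - \<sigma>..n} z2 \<Longrightarrow>
      (\<And>s. s \<in> {m - \<sigma>..n} \<Longrightarrow> exp (- (\<theta> * \<Phi> (max m s))) * \<bar>z1 s - z2 s\<bar> \<le> d) \<Longrightarrow>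
      t \<in> {m - \<sigma>..n} \<Longrightarrow>
      exp (- (\<theta> * \<Phi> (max m t))) * \<bar>solution_map z1 t - solution_map z2 t\<bar> \<le> 1 / 2 * d"
proof -
  obtain M where M: "\<forall>s\<in>{0..\<Phi> n - \<Phi> m}. \<bar>mittag_leffler_factor s\<bar> \<le> M"
    using mittag_leffler_factor_bounded ..
  define K where "K = M * 2 * L * ((\<Phi> n - \<Phi> m) powr (\<mu> / 2) / (\<mu> / 2))"
  have "((\<lambda>\<theta>. K * \<theta> powr (- (\<mu> / 2))) \<longlongrightarrow> 0) at_top"
    using mu_pos by (intro tendsto_mult_right_zero tendsto_neg_powr filterlim_ident) auto
  then have "\<forall>\<^sub>F \<theta> in at_top. K * \<theta> powr (- (\<mu> / 2)) < 1 / 2 \<and> 0 < \<theta>"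
    by (intro eventually_conj order_tendstoD(2) eventually_gt_at_top) auto
  then obtain \<theta> where \<theta>: "0 < \<theta>" "K * \<theta> powr (- (\<mu> / 2)) < 1 / 2"
    unfolding eventually_at_top_linorder by auto
  show ?thesis
  proof (rule that[OF \<theta>(1)])
    fix z1 z2 d t
    assume z: "continuous_on {m - \<sigma>..n} z1" "continuous_on {m - \<sigma>..n} z2"
      and weighted: "\<And>s. s \<in> {m - \<sigma>..n} \<Longrightarrow> exp (- (\<theta> * \<Phi> (max m s))) * \<bar>z1 s - z2 s\<bar> \<le> d"
      and t: "t \<in> {m - \<sigma>..n}"
    have "0 \<le> exp (- (\<theta> * \<Phi> (max m t))) * \<bar>z1 t - z2 t\<bar>"
      by simp
    with weighted[OF t] have "0 \<le> d"
      by linarith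
    have "\<bar>z1 s - z2 s\<bar> \<le> d * exp (\<theta> * \<Phi> (max m s))" if "s \<in> {m - \<sigma>..n}" for s
      using weighted[OF that] by (simp add: exp_minus field_simps)
    note diff_le = solution_map_weighted_diff_le[OF \<theta>(1) M[rule_format] z this]
    show "exp (- (\<theta> * \<Phi> (max m t))) * \<bar>solution_map z1 t - solution_map z2 t\<bar> \<le> 1 / 2 * d"
    proof (cases "t \<le> m")
      case True
      with \<open>0 \<le> d\<close> show ?thesis
        by (simp add: solution_map_def)
    next
      case False
      with t diff_le[of t]
      have "exp (- (\<theta> * \<Phi> (max m t))) * \<bar>solution_map z1 t - solution_map z2 t\<bar>
          \<le> d * (K * \<theta> powr (- (\<mu> / 2)))"
        by (simp add: K_def max_absorb2 mult_ac)
      also have "\<dots> \<le> 1 / 2 * d"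
        using mult_left_mono[OF less_imp_le[OF \<theta>(2)] \<open>0 \<le> d\<close>] by (simp add: mult.commute)
      finally show ?thesis .
    qed
  qed
qed

lemma solution_map_unique_fixpoint:
  "\<exists>z. continuous_on {m - \<sigma>..n} z \<and> (\<forall>t\<in>{m - \<sigma>..n}. solution_map z t = z t) \<and>
    (\<forall>z'. continuous_on {m - \<sigma>..n} z' \<and> (\<forall>t\<in>{m - \<sigma>..n}. solution_map z' t = z' t) \<longrightarrow>
      (\<forall>t\<in>{m - \<sigma>..n}. z' t = z t))"
proof -
  obtain \<theta> where "0 < \<theta>" and contraction: "\<And>z1 z2 d t. continuous_on {m - \<sigma>..n} z1 \<Longrightarrow>
      continuous_on {m - \<sigma>..n} z2 \<Longrightarrow>
      (\<And>s. s \<in> {m - \<sigma>..n} \<Longrightarrow> exp (- (\<theta> * \<Phi> (max m s))) * \<bar>z1 s - z2 s\<bar> \<le> d) \<Longrightarrow>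
      t \<in> {m - \<sigma>..n} \<Longrightarrow>
      exp (- (\<theta> * \<Phi> (max m t))) * \<bar>solution_map z1 t - solution_map z2 t\<bar> \<le> 1 / 2 * d"
    using solution_map_contraction by blast
  have "continuous_on {m - \<sigma>..n} (\<lambda>s. \<Phi> (max m s))"
    using m_less_n by (intro continuous_on_compose2[OF Phi_continuous] continuous_intros) auto
  then have w_cont: "continuous_on {m - \<sigma>..n} (\<lambda>s. exp (- (\<theta> * \<Phi> (max m s))))"
    by (intro continuous_intros)
  have w_pos: "0 < exp (- (\<theta> * \<Phi> (max m t)))" for t
    by simp
  have "m - \<sigma> \<le> n" "0 \<le> (1 :: real) / 2" "(1 :: real) / 2 < 1"
    using sigma_pos m_less_n by simp_all
  from weighted_contraction_fixpoint_exists[OF this w_cont w_pos continuous_on_solution_map contraction]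
  obtain z where z: "continuous_on {m - \<sigma>..n} z \<and> (\<forall>t\<in>{m - \<sigma>..n}. solution_map z t = z t)" ..
  moreover have "z' t = z t"
    if "continuous_on {m - \<sigma>..n} z'" "\<forall>t\<in>{m - \<sigma>..n}. solution_map z' t = z' t" "t \<in> {m - \<sigma>..n}"
    for z' t
    using z weighted_contraction_fixpoint_unique[where T = solution_map and
        w = "\<lambda>s. exp (- (\<theta> * \<Phi> (max m s)))", OF \<open>1 / 2 < 1\<close> w_cont w_pos contraction that(1,2)]
      that(3) by blast
  ultimately show ?thesis
    by blast
qed

lemma solution_map_fixpoint_iff:
  "(\<forall>t\<in>{m - \<sigma>..n}. solution_map z t = z t) \<longleftrightarrow> (\<forall>l\<in>{m - \<sigma>..m}. z l = \<alpha> l) \<and>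
    (\<forall>l\<in>{m..n}. kernel_integral \<mu> mittag_leffler_factor (rhs z) l = z l - \<alpha> m)"
proof -
  have low: "solution_map z l = z l \<longleftrightarrow> z l = \<alpha> l" if "l \<le> m" for l
    using that by (auto simp: solution_map_def)
  have high: "solution_map z l = z l \<longleftrightarrow> kernel_integral \<mu> mittag_leffler_factor (rhs z) l = z l - \<alpha> m"
    if "l \<in> {m..n}" for l
    using that by (cases "l = m") (auto simp: solution_map_def)
  have "{m - \<sigma>..n} = {m - \<sigma>..m} \<union> {m..n}"
    using sigma_pos m_less_n by auto
  then have "(\<forall>t\<in>{m - \<sigma>..n}. solution_map z t = z t) \<longleftrightarrow>
      (\<forall>t\<in>{m - \<sigma>..m}. solution_map z t = z t) \<and> (\<forall>t\<in>{m..n}. solution_map z t = z t)"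
    by blast
  also have "\<dots> \<longleftrightarrow> (\<forall>l\<in>{m - \<sigma>..m}. z l = \<alpha> l) \<and>
      (\<forall>l\<in>{m..n}. kernel_integral \<mu> mittag_leffler_factor (rhs z) l = z l - \<alpha> m)"
    using low high by (intro conj_cong ball_cong refl) auto
  finally show ?thesis .
qed

lemma has_integral_iff_kernel_integral:
  assumes "continuous_on {m - \<sigma>..n} z" "l \<in> {m..n}"
  shows "((\<lambda>\<eta>. kernel \<mu> l \<eta> * mittag_leffler_factor (\<Phi> l - \<Phi> \<eta>) * rhs z \<eta>) has_integral v) {m..l}
    \<longleftrightarrow> kernel_integral \<mu> mittag_leffler_factor (rhs z) l = v"
proof -
  have "continuous_on {m..l} (rhs z)"
    using assms by (intro continuous_on_subset[OF continuous_on_rhs]) auto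
  then have "(\<lambda>\<eta>. kernel \<mu> l \<eta> * mittag_leffler_factor (\<Phi> l - \<Phi> \<eta>) * rhs z \<eta>) integrable_on {m..l}"
    using assms(2) by (intro integrable_kernel_comp_times mu_pos continuous_on_mittag_leffler_factor) auto
  then show ?thesis
    unfolding kernel_integral_def by (simp add: has_integral_integrable_integral)
qed

lemma is_solution_iff_fixpoint:
  "is_solution m n \<sigma> \<mu> \<kappa> \<rho> \<Phi> \<Phi>' \<alpha> f Q z \<longleftrightarrow>
    continuous_on {m - \<sigma>..n} z \<and> (\<forall>t\<in>{m - \<sigma>..n}. solution_map z t = z t)"
proof -
  have integrand: "(\<lambda>\<eta>. \<Phi>' \<eta> * (\<Phi> l - \<Phi> \<eta>) powr (\<mu> - 1)
      * ML2 (\<mu> - \<kappa>) \<mu> (- \<rho> * (\<Phi> l - \<Phi> \<eta>) powr (\<mu> - \<kappa>)) * Q \<eta> (z \<eta>) (z (f \<eta>)))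
    = (\<lambda>\<eta>. kernel \<mu> l \<eta> * mittag_leffler_factor (\<Phi> l - \<Phi> \<eta>) * rhs z \<eta>)" for l
    by (simp add: kernel_def mittag_leffler_factor_def rhs_def)
  have "continuous_on {m - \<sigma>..n} z \<Longrightarrow> continuous_on {m..n} z"
    by (erule continuous_on_subset) (use sigma_pos in auto)
  then have "is_solution m n \<sigma> \<mu> \<kappa> \<rho> \<Phi> \<Phi>' \<alpha> f Q z \<longleftrightarrow> continuous_on {m - \<sigma>..n} z \<and>
      (\<forall>l\<in>{m - \<sigma>..m}. z l = \<alpha> l) \<and>
      (\<forall>l\<in>{m..n}. ((\<lambda>\<eta>. kernel \<mu> l \<eta> * mittag_leffler_factor (\<Phi> l - \<Phi> \<eta>) * rhs z \<eta>) has_integral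
        (z l - \<alpha> m)) {m..l})"
    unfolding is_solution_def integrand by blast
  also have "\<dots> \<longleftrightarrow> continuous_on {m - \<sigma>..n} z \<and> (\<forall>l\<in>{m - \<sigma>..m}. z l = \<alpha> l) \<and>
      (\<forall>l\<in>{m..n}. kernel_integral \<mu> mittag_leffler_factor (rhs z) l = z l - \<alpha> m)"
    using has_integral_iff_kernel_integral by (intro conj_cong ball_cong refl) auto
  finally show ?thesis
    by (simp only: solution_map_fixpoint_iff)
qed

end

theorem mainTheorem2:
  fixes m n \<sigma> \<rho> \<kappa> \<mu> L :: real
    and \<Phi> \<Phi>' \<alpha> f :: "real \<Rightarrow> real"
    and Q :: "real \<Rightarrow> real \<Rightarrow> real \<Rightarrow> real"
  assumes "0 < m" "m < n" "0 < \<sigma>" "0 < \<rho>" "0 < \<kappa>" "\<kappa> < \<mu>" "\<mu> \<le> 1"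
    and "mono_on {m..n} \<Phi>"
    and "\<And>l. l \<in> {m..n} \<Longrightarrow> (\<Phi> has_real_derivative \<Phi>' l) (at l within {m..n})"
    and "\<And>l. l \<in> {m..n} \<Longrightarrow> \<Phi>' l \<noteq> 0"
    and "continuous_on {m - \<sigma>..m} \<alpha>"
    and H1: "continuous_on {m..n} f" "f ` {m..n} \<subseteq> {m - \<sigma>..n}" "\<And>l. l \<in> {m..n} \<Longrightarrow> f l \<le> l"
    and H2: "continuous_on ({m..n} \<times> UNIV) (\<lambda>(l, b, a). Q l b a)"
      "0 < L"
      "\<And>l a1 a2 b1 b2. l \<in> {m..n} \<Longrightarrow>
         \<bar>Q l b2 a2 - Q l b1 a1\<bar> \<le> L * (\<bar>b2 - b1\<bar> + \<bar>a2 - a1\<bar>)"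
  shows "\<exists>z. is_solution m n \<sigma> \<mu> \<kappa> \<rho> \<Phi> \<Phi>' \<alpha> f Q z \<and>
           (\<forall>w. is_solution m n \<sigma> \<mu> \<kappa> \<rho> \<Phi> \<Phi>' \<alpha> f Q w \<longrightarrow>
                 (\<forall>x\<in>{m - \<sigma>..n}. w x = z x))"
proof -
  interpret delay_problem m n \<Phi> \<Phi>' \<sigma> \<mu> \<kappa> \<rho> L \<alpha> f Q
    by unfold_locales (use assms in auto)
  show ?thesis
    using solution_map_unique_fixpoint unfolding is_solution_iff_fixpoint by blast
qed

end
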